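(* In the setting described in the context, suppose $p_j(\theta)>0$ for all $j$ and all $\theta$. Then $H(\theta)=C_\Upsilon(\theta)$ holds if and only if the channel is quasi-classical, i.e. the eigenvectors $|w_k\rangle$ of the output state do not depend on $\theta$.
   Context: A one-parameter quantum channel is a map $\rho_0\mapsto\sum_k E_k(\theta)\rho_0E_k(\theta)^\dagger$ on density matrices on $\mathbb{C}^d$, with Kraus operators depending differentiably on real $\theta$ and $\sum_k E_k^\dagger E_k=I$. The input is a fixed pure state $\rho_0=|\psi_0\rangle\langle\psi_0|$. Canonical Kraus operators $\{\Upsilon_k(\theta)\}_{k=1}^d$: a differentiable Kraus representation of the same channel with $\mathrm{tr}\{\Upsilon_k\rho_0\Upsilon_j^\dagger\}=\delta_{jk}p_k(\theta)$. The output state is $\rho_{out}(\theta)=\sum_k p_k(\theta)|w_k(\theta)\rangle\langle w_k(\theta)|$ with $|w_k\rangle=p_k^{-1/2}\Upsilon_k|\psi_0\rangle$ an orthonormal basis depending differentiably on $\theta$. A prime denotes $d/d\theta$. $C_\Upsilon(\theta)=4\sum_k\mathrm{tr}\{\Upsilon_k'\rho_0\Upsilon_k'^\dagger\}$, and $H(\theta)=\mathrm{tr}\{\rho_{out}\lambda^2\}$ is the SLD quantum information, $\lambda$ a self-adjoint solution of $\rho_{out}'=\frac12(\rho_{out}\lambda+\lambda\rho_{out})$. *)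

theory Defs
  imports "HOL-Analysis.Analysis"
begin

text \<open>Complex d x d matrices are rendered as complex^'n^'n with a finite index type 'n
  (d = CARD('n)); vectors in C^d as complex^'n.\<close>

definition cadj :: "complex^'n^'m \<Rightarrow> complex^'m^'n" where
  "cadj A = (\<chi> i j. cnj (A $ j $ i))"

definition hermitian :: "complex^'n^'n \<Rightarrow> bool" where
  "hermitian A \<longleftrightarrow> cadj A = A"

definition outer :: "complex^'n \<Rightarrow> complex^'n \<Rightarrow> complex^'n^'n" where
  "outer x y = (\<chi> i j. x $ i * cnj (y $ j))"

definition channel_out :: "('k::finite \<Rightarrow> complex^'n^'n) \<Rightarrow> complex^'n^'n \<Rightarrow> complex^'n^'n" where
  "channel_out E rho = (\<Sum>k\<in>UNIV. E k ** rho ** cadj (E k))"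

definition rho_out :: "('k::finite \<Rightarrow> real \<Rightarrow> complex^'n^'n) \<Rightarrow> complex^'n \<Rightarrow> real \<Rightarrow> complex^'n^'n" where
  "rho_out U psi0 \<theta> = channel_out (\<lambda>k. U k \<theta>) (outer psi0 psi0)"

definition wvec :: "('k \<Rightarrow> real \<Rightarrow> complex^'n^'n) \<Rightarrow> ('k \<Rightarrow> real \<Rightarrow> real) \<Rightarrow> complex^'n \<Rightarrow> 'k \<Rightarrow> real \<Rightarrow> complex^'n" where
  "wvec U p psi0 k \<theta> = (1 / sqrt (p k \<theta>)) *\<^sub>R (U k \<theta> *v psi0)"

definition C_Ups :: "('k::finite \<Rightarrow> real \<Rightarrow> complex^'n^'n) \<Rightarrow> complex^'n \<Rightarrow> real \<Rightarrow> complex" where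
  "C_Ups U' psi0 \<theta> = 4 * (\<Sum>k\<in>UNIV. trace (U' k \<theta> ** outer psi0 psi0 ** cadj (U' k \<theta>)))"

end

theory Submission
  imports Defs
begin

text \<open>
  Collect the vectors \<open>\<Upsilon>\<^sub>k \<psi>\<^sub>0\<close> as the columns of a matrix \<open>V\<close>, so that
  \<open>\<rho>\<^sub>o\<^sub>u\<^sub>t = V V\<^sup>\<dagger>\<close> and \<open>V\<^sup>\<dagger>V = P = diag p\<close>.
  Conjugating the SLD equation by \<open>V\<close> gives \<open>A P + P A\<^sup>\<dagger> = (P M + M P)/2\<close> with
  \<open>A = V\<^sup>\<dagger>V'\<close> and \<open>M = V\<^sup>\<dagger>\<lambda>V\<close>, and differentiating \<open>V\<^sup>\<dagger>V = P\<close> shows that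
  \<open>A + A\<^sup>\<dagger>\<close> is diagonal. Entrywise this yields \<open>|M\<^sub>j\<^sub>k|\<^sup>2 \<le> 4|A\<^sub>j\<^sub>k|\<^sup>2\<close>, with equality
  exactly when \<open>A\<^sub>j\<^sub>k = 0\<close> (off the diagonal) or \<open>A\<^sub>k\<^sub>k\<close> is real. As \<open>H\<close> and
  \<open>C\<^sub>\<Upsilon>\<close> are the sums of \<open>|M\<^sub>j\<^sub>k|\<^sup>2/p\<^sub>j\<close> and \<open>4|A\<^sub>j\<^sub>k|\<^sup>2/p\<^sub>j\<close>, \<open>H = C\<^sub>\<Upsilon>\<close> iff \<open>A\<close> is
  real diagonal, i.e. iff each \<open>\<Upsilon>\<^sub>k'\<psi>\<^sub>0\<close> is the multiple \<open>(p\<^sub>k'/2p\<^sub>k) \<Upsilon>\<^sub>k\<psi>\<^sub>0\<close>,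
  which is exactly the vanishing of the derivative of \<open>w\<^sub>k = p\<^sub>k\<^sup>-\<^sup>1\<^sup>/\<^sup>2 \<Upsilon>\<^sub>k\<psi>\<^sub>0\<close>.
\<close>

definition diag_mat :: "('n \<Rightarrow> 'a::zero) \<Rightarrow> 'a^'n^'n" where
  "diag_mat d = (\<chi> i j. if i = j then d i else 0)"

definition real_diagonal :: "complex^'n^'n \<Rightarrow> bool" where
  "real_diagonal A \<longleftrightarrow> (\<forall>j k. (j \<noteq> k \<longrightarrow> A $ j $ k = 0) \<and> Im (A $ k $ k) = 0)"

lemma matrix_mult_nth: "(A ** B) $ i $ j = (\<Sum>k\<in>UNIV. A $ i $ k * B $ k $ j)"
  by (simp add: matrix_matrix_mult_def)

lemma cadj_nth [simp]: "cadj A $ i $ j = cnj (A $ j $ i)"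
  by (simp add: cadj_def)

lemma cadj_cadj [simp]: "cadj (cadj A) = A"
  by (simp add: vec_eq_iff)

lemma cadj_mult: "cadj (A ** B) = cadj B ** (cadj A :: complex^'n^'m)"
  by (simp add: vec_eq_iff matrix_mult_nth mult.commute)

lemma matrix_add_rdistrib: "(A + B) ** C = A ** C + B ** (C::'a::semiring_1^'p^'n)"
  by (simp add: matrix_matrix_mult_def vec_eq_iff sum.distrib distrib_right)

lemma matrix_mult_diag_mat_nth: "(A ** diag_mat d) $ i $ j = A $ i $ j * d j"
  by (simp add: matrix_mult_nth diag_mat_def if_distrib cong: if_cong)

lemma diag_mat_mult_nth: "(diag_mat d ** A) $ i $ j = d i * A $ i $ j"
proof -
  have "(diag_mat d ** A) $ i $ j = (\<Sum>k\<in>UNIV. if k = i then d i * A $ i $ j else 0)"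
    unfolding matrix_mult_nth diag_mat_def by (rule sum.cong) auto
  then show ?thesis by simp
qed

lemma outer_mult_left: "A ** outer x y = outer (A *v x) y"
  by (simp add: vec_eq_iff matrix_mult_nth outer_def matrix_vector_mult_def sum_distrib_right mult.assoc)

lemma outer_mult_cadj: "outer x y ** cadj B = outer x (B *v y)"
  by (simp add: vec_eq_iff matrix_mult_nth outer_def matrix_vector_mult_def sum_distrib_left mult_ac)

lemma bounded_linear_cadj: "bounded_linear (cadj :: complex^'n^'m \<Rightarrow> _)"
  by (auto simp: vec_eq_iff linear_conv_bounded_linear[symmetric] intro!: linearI)

lemma bounded_linear_column: "bounded_linear (column k :: complex^'n^'m::finite \<Rightarrow> _)"
  by (auto simp: vec_eq_iff column_def linear_conv_bounded_linear[symmetric] intro!: linearI)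

lemma bounded_bilinear_matrix_mult:
  "bounded_bilinear (\<lambda>A B::complex^'n::finite^'n. A ** B)"
  unfolding bilinear_conv_bounded_bilinear[symmetric] bilinear_def
  by (auto intro!: linearI simp: matrix_add_rdistrib matrix_add_ldistrib
      scalar_matrix_assoc[symmetric] matrix_scalar_ac)

lemma has_vector_derivative_cadj_mult:
  fixes V :: "real \<Rightarrow> complex^'n::finite^'n"
  assumes "(V has_vector_derivative V') (at t)"
  shows "((\<lambda>s. cadj (V s) ** V s) has_vector_derivative cadj V' ** V t + cadj (V t) ** V') (at t)"
  using bounded_bilinear.has_vector_derivative[OF bounded_bilinear_matrix_mult
      bounded_linear.has_vector_derivative[OF bounded_linear_cadj assms] assms]
  by (simp add: add.commute)

lemma has_vector_derivative_mult_cadj: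
  fixes V :: "real \<Rightarrow> complex^'n::finite^'n"
  assumes "(V has_vector_derivative V') (at t)"
  shows "((\<lambda>s. V s ** cadj (V s)) has_vector_derivative V' ** cadj (V t) + V t ** cadj V') (at t)"
  using bounded_bilinear.has_vector_derivative[OF bounded_bilinear_matrix_mult
      assms bounded_linear.has_vector_derivative[OF bounded_linear_cadj assms]]
  by (simp add: add.commute)

lemma has_vector_derivative_vec_lambda:
  fixes f :: "real \<Rightarrow> 'i::finite \<Rightarrow> 'a::euclidean_space"
  assumes "\<And>i. ((\<lambda>t. f t i) has_vector_derivative f' i) (at t)"
  shows "((\<lambda>t. \<chi> i. f t i) has_vector_derivative (\<chi> i. f' i)) (at t)"
proof -
  have "bounded_linear (axis i :: 'a \<Rightarrow> 'a^'i)" for i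
    by (auto simp: vec_eq_iff axis_def linear_conv_bounded_linear[symmetric] intro!: linearI)
  then have "((\<lambda>t. \<Sum>i\<in>UNIV. axis i (f t i)) has_vector_derivative (\<Sum>i\<in>UNIV. axis i (f' i))) (at t)"
    by (intro has_vector_derivative_sum bounded_linear.has_vector_derivative[of "axis _"] assms)
  moreover have "(\<chi> i. g i) = (\<Sum>i\<in>UNIV. axis i (g i))" for g :: "'i \<Rightarrow> 'a"
    by (simp add: vec_eq_iff sum_component axis_def)
  ultimately show ?thesis
    by simp
qed

lemma has_vector_derivative_normalize:
  fixes u :: "real \<Rightarrow> 'a::real_normed_vector"
  assumes "0 < p t" and "(p has_real_derivative p') (at t)" and "(u has_vector_derivative u') (at t)"
  shows "((\<lambda>s. (1 / sqrt (p s)) *\<^sub>R u s) has_vector_derivative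
    (1 / sqrt (p t)) *\<^sub>R (u' - (p' / (2 * p t)) *\<^sub>R u t)) (at t)"
proof -
  have "((\<lambda>s. sqrt (p s)) has_real_derivative inverse (sqrt (p t)) / 2 * p') (at t)"
    by (rule DERIV_chain2[OF DERIV_real_sqrt[OF assms(1)] assms(2)])
  then have "((\<lambda>s. inverse (sqrt (p s))) has_real_derivative
      - (inverse (sqrt (p t)) / 2 * p' * inverse (sqrt (p t) ^ Suc (Suc 0)))) (at t)"
    by (rule DERIV_inverse_fun) (use assms(1) in simp)
  then have "((\<lambda>s. 1 / sqrt (p s)) has_real_derivative - (1 / sqrt (p t)) * (p' / (2 * p t))) (at t)"
    using assms(1) by (simp add: inverse_eq_divide field_simps)
  from has_vector_derivative_scaleR[OF this assms(3)] show ?thesis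
    by (simp add: algebra_simps)
qed

lemma constant_iff_vector_derivative_zero:
  assumes "\<And>t. (f has_vector_derivative f' t) (at t)"
  shows "(\<exists>v. \<forall>t. f t = v) \<longleftrightarrow> (\<forall>t. f' t = 0)"
proof
  assume "\<exists>v. \<forall>t. f t = v"
  then obtain v where "f = (\<lambda>_. v)"
    by blast
  then show "\<forall>t. f' t = 0"
    using assms by (metis vector_derivative_unique_at has_vector_derivative_const)
next
  assume "\<forall>t. f' t = 0"
  then have "(f has_vector_derivative 0) (at t within UNIV)" for t
    using assms by simp
  then obtain c where "\<And>t. f t = c"
    using has_vector_derivative_zero_constant[of UNIV f] by auto
  then show "\<exists>v. \<forall>t. f t = v"
    by blast
qed

lemma sum_eq_iff_of_le:
  fixes f g :: "'i \<Rightarrow> 'a::ordered_cancel_comm_monoid_add"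
  assumes "finite I" and "\<And>i. i \<in> I \<Longrightarrow> f i \<le> g i"
  shows "sum f I = sum g I \<longleftrightarrow> (\<forall>i\<in>I. f i = g i)"
  using sum_mono_inv[of f I g] assms by (auto intro: sum.cong)

lemma cmod_sq_le_of_weighted_eq:
  fixes a m :: complex and x y :: real
  assumes "0 < x" "0 < y" and eq: "of_real (x + y) * m = 2 * of_real (y - x) * a"
  shows "cmod m ^ 2 \<le> 4 * cmod a ^ 2" "cmod m ^ 2 = 4 * cmod a ^ 2 \<longleftrightarrow> a = 0"
proof -
  have "(x + y) * cmod m = cmod (of_real (x + y) * m)"
    using assms(1,2) by (simp only: norm_mult norm_of_real abs_of_pos add_pos_pos)
  also have "\<dots> = 2 * \<bar>y - x\<bar> * cmod a"
    by (simp only: eq norm_mult norm_of_real norm_numeral)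
  finally have "(x + y) * cmod m = 2 * \<bar>y - x\<bar> * cmod a" .
  then have m: "cmod m = 2 * (\<bar>y - x\<bar> / (x + y)) * cmod a"
    using assms by (simp add: field_simps)
  have "\<bar>y - x\<bar> / (x + y) < 1"
    using assms by simp
  then have r2: "(\<bar>y - x\<bar> / (x + y)) ^ 2 < 1"
    using assms(1,2) by (simp add: abs_square_less_1)
  have cm: "cmod m ^ 2 = 4 * cmod a ^ 2 * (\<bar>y - x\<bar> / (x + y)) ^ 2"
    unfolding m by (simp add: power_mult_distrib power_divide)
  show "cmod m ^ 2 \<le> 4 * cmod a ^ 2"
    unfolding cm using r2 by (simp add: mult_left_le)
  show "cmod m ^ 2 = 4 * cmod a ^ 2 \<longleftrightarrow> a = 0"
    unfolding cm using r2 by (auto simp: mult_left_le)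
qed

lemma cmod_add_cnj_sq_le:
  fixes a :: complex
  shows "cmod (a + cnj a) ^ 2 \<le> 4 * cmod a ^ 2" "cmod (a + cnj a) ^ 2 = 4 * cmod a ^ 2 \<longleftrightarrow> Im a = 0"
  by (simp_all add: complex_add_cnj cmod_power2 power_mult_distrib)

lemma trace_cadj_diag_mat_mult:
  "trace (cadj A ** diag_mat (\<lambda>k. complex_of_real (w k)) ** A)
     = of_real (\<Sum>j\<in>UNIV. \<Sum>k\<in>UNIV. w k * cmod (A $ k $ j) ^ 2)"
proof -
  have "trace (cadj A ** diag_mat (\<lambda>k. complex_of_real (w k)) ** A)
      = (\<Sum>j\<in>UNIV. \<Sum>k\<in>UNIV. cnj (A $ k $ j) * of_real (w k) * A $ k $ j)"
    by (simp add: trace_def matrix_mult_nth[of _ A] matrix_mult_diag_mat_nth)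
  also have "\<dots> = (\<Sum>j\<in>UNIV. \<Sum>k\<in>UNIV. of_real (w k * cmod (A $ k $ j) ^ 2))"
    by (intro sum.cong refl) (simp add: mult_ac flip: complex_norm_square)
  finally show ?thesis
    by simp
qed

lemma diag_gram_right_inverse:
  fixes V :: "complex^'n::finite^'n"
  assumes "\<And>k. 0 < p k" and "cadj V ** V = diag_mat (\<lambda>k. of_real (p k))"
  shows "V ** (diag_mat (\<lambda>k. of_real (1 / p k)) ** cadj V) = mat 1"
proof -
  have "diag_mat (\<lambda>k. of_real (1 / p k)) ** diag_mat (\<lambda>k. of_real (p k)) = (mat 1 :: complex^'n^'n)"
    using assms(1)[THEN less_imp_neq]
    by (simp add: vec_eq_iff diag_mat_mult_nth) (simp add: diag_mat_def mat_def)
  then have "diag_mat (\<lambda>k. of_real (1 / p k)) ** cadj V ** V = mat 1"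
    by (simp add: assms(2) flip: matrix_mul_assoc)
  then show ?thesis
    using matrix_left_right_inverse by (metis matrix_mul_assoc)
qed

lemma sld_entry_bound:
  fixes V V' L :: "complex^'n::finite^'n" and p :: "'n \<Rightarrow> real"
  assumes pos: "\<And>k. 0 < p k"
    and gram: "cadj V ** V = diag_mat (\<lambda>k. of_real (p k))"
    and sld: "V' ** cadj V + V ** cadj V' = (1/2) *\<^sub>R (V ** cadj V ** L + L ** (V ** cadj V))"
    and skew: "\<And>j k. j \<noteq> k \<Longrightarrow> (cadj V' ** V + cadj V ** V') $ j $ k = 0"
  defines "A \<equiv> cadj V ** V'" and "M \<equiv> cadj V ** L ** V"
  shows "cmod (M $ j $ k) ^ 2 \<le> 4 * cmod (A $ j $ k) ^ 2"
    and "cmod (M $ j $ k) ^ 2 = 4 * cmod (A $ j $ k) ^ 2 \<longleftrightarrow>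
           (if j = k then Im (A $ j $ k) = 0 else A $ j $ k = 0)"
proof -
  define P where "P = diag_mat (\<lambda>k. complex_of_real (p k))"
  have "cadj V ** (V' ** cadj V + V ** cadj V') ** V
      = cadj V ** ((1/2) *\<^sub>R (V ** cadj V ** L + L ** (V ** cadj V))) ** V"
    by (simp only: sld)
  then have "A ** P + P ** cadj A = (1/2) *\<^sub>R (P ** M + M ** P)"
    unfolding A_def M_def P_def gram[symmetric]
    by (simp add: cadj_mult matrix_add_ldistrib matrix_add_rdistrib matrix_mul_assoc
        matrix_scalar_ac scaleR_add_right flip: scalar_matrix_assoc)
  then have "(A ** P + P ** cadj A) $ j $ k = ((1/2) *\<^sub>R (P ** M + M ** P)) $ j $ k"
    by simp
  then have entry: "of_real (p j + p k) * M $ j $ k = 2 * (A $ j $ k * of_real (p k) + of_real (p j) * cnj (A $ k $ j))"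
    by (simp add: P_def matrix_mult_diag_mat_nth diag_mat_mult_nth)
      (simp add: scaleR_conv_of_real algebra_simps)
  have "cmod (M $ j $ k) ^ 2 \<le> 4 * cmod (A $ j $ k) ^ 2 \<and>
      (cmod (M $ j $ k) ^ 2 = 4 * cmod (A $ j $ k) ^ 2 \<longleftrightarrow>
        (if j = k then Im (A $ j $ k) = 0 else A $ j $ k = 0))"
  proof (cases "j = k")
    case True
    with entry have "of_real (p k) * (2 * M $ k $ k) = of_real (p k) * (2 * (A $ k $ k + cnj (A $ k $ k)))"
      by (simp add: algebra_simps)
    then have "M $ k $ k = A $ k $ k + cnj (A $ k $ k)"
      using pos[of k] by (simp only: mult_cancel_left of_real_eq_0_iff) simp
    then show ?thesis
      using True cmod_add_cnj_sq_le by auto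
  next
    case False
    have "cnj (A $ k $ j) = - A $ j $ k"
      using skew[OF False] by (simp add: A_def matrix_mult_nth mult.commute eq_neg_iff_add_eq_0)
    with entry have "of_real (p j + p k) * M $ j $ k = 2 * of_real (p k - p j) * A $ j $ k"
      by (simp add: algebra_simps)
    then show ?thesis
      using False cmod_sq_le_of_weighted_eq[OF pos pos] by auto
  qed
  then show "cmod (M $ j $ k) ^ 2 \<le> 4 * cmod (A $ j $ k) ^ 2"
    and "cmod (M $ j $ k) ^ 2 = 4 * cmod (A $ j $ k) ^ 2 \<longleftrightarrow>
           (if j = k then Im (A $ j $ k) = 0 else A $ j $ k = 0)"
    by auto
qed

lemma sld_information_eq_iff:
  fixes V V' L :: "complex^'n::finite^'n" and p :: "'n \<Rightarrow> real"
  assumes pos: "\<And>k. 0 < p k"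
    and gram: "cadj V ** V = diag_mat (\<lambda>k. of_real (p k))"
    and herm: "hermitian L"
    and sld: "V' ** cadj V + V ** cadj V' = (1/2) *\<^sub>R (V ** cadj V ** L + L ** (V ** cadj V))"
    and skew: "\<And>j k. j \<noteq> k \<Longrightarrow> (cadj V' ** V + cadj V ** V') $ j $ k = 0"
  shows "trace (V ** cadj V ** L ** L) = 4 * trace (cadj V' ** V') \<longleftrightarrow> real_diagonal (cadj V ** V')"
proof -
  define A where "A = cadj V ** V'"
  define M where "M = cadj V ** L ** V"
  define D where "D = diag_mat (\<lambda>k. complex_of_real (1 / p k))"
  note inv = diag_gram_right_inverse[OF pos gram, folded D_def]
  have "cadj M = M"
    using herm by (simp add: M_def hermitian_def cadj_mult matrix_mul_assoc)
  have "trace (V ** cadj V ** L ** L) = trace (cadj V ** L ** L ** V)"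
    using trace_mul_sym[of V "cadj V ** L ** L"] by (simp add: matrix_mul_assoc)
  also have "\<dots> = trace (cadj V ** L ** (V ** (D ** cadj V)) ** L ** V)"
    by (simp add: inv)
  also have "\<dots> = trace (cadj M ** D ** M)"
    by (simp add: \<open>cadj M = M\<close>) (simp add: M_def matrix_mul_assoc)
  finally have H: "trace (V ** cadj V ** L ** L)
      = of_real (\<Sum>j\<in>UNIV. \<Sum>k\<in>UNIV. 1 / p k * cmod (M $ k $ j) ^ 2)"
    by (simp only: D_def trace_cadj_diag_mat_mult)
  have "trace (cadj V' ** V') = trace (cadj V' ** (V ** (D ** cadj V)) ** V')"
    by (simp add: inv)
  also have "\<dots> = trace (cadj A ** D ** A)"
    by (simp add: A_def cadj_mult matrix_mul_assoc)
  finally have C: "4 * trace (cadj V' ** V')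
      = of_real (\<Sum>j\<in>UNIV. \<Sum>k\<in>UNIV. 1 / p k * (4 * cmod (A $ k $ j) ^ 2))"
    unfolding D_def trace_cadj_diag_mat_mult by (simp add: sum_distrib_left mult_ac)
  have le: "1 / p k * cmod (M $ k $ j) ^ 2 \<le> 1 / p k * (4 * cmod (A $ k $ j) ^ 2)" for j k
    using sld_entry_bound(1)[OF pos gram sld skew] pos[of k]
    by (simp add: A_def M_def divide_right_mono)
  have "trace (V ** cadj V ** L ** L) = 4 * trace (cadj V' ** V')
      \<longleftrightarrow> (\<forall>j k. 1 / p k * cmod (M $ k $ j) ^ 2 = 1 / p k * (4 * cmod (A $ k $ j) ^ 2))"
    unfolding H C of_real_eq_iff sum.cartesian_product
    by (subst sum_eq_iff_of_le) (use le in auto)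
  also have "\<dots> \<longleftrightarrow> (\<forall>j k. if k = j then Im (A $ k $ j) = 0 else A $ k $ j = 0)"
    using sld_entry_bound(2)[OF pos gram sld skew] pos[THEN less_imp_neq, symmetric]
    by (simp add: A_def M_def)
  also have "\<dots> \<longleftrightarrow> real_diagonal A"
    by (auto simp: real_diagonal_def)
  finally show ?thesis
    unfolding A_def .
qed

lemma real_diagonal_iff_columns:
  fixes V V' :: "complex^'n::finite^'n" and p :: "'n \<Rightarrow> real"
  assumes pos: "\<And>k. 0 < p k"
    and gram: "cadj V ** V = diag_mat (\<lambda>k. of_real (p k))"
  shows "real_diagonal (cadj V ** V') \<longleftrightarrow>
    (\<forall>k. column k V' = (Re ((cadj V ** V') $ k $ k) / p k) *\<^sub>R column k V)"
proof -
  define A where "A = cadj V ** V'"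
  have column_eq: "column k V' = c *\<^sub>R column k V \<longleftrightarrow> (\<forall>i. V' $ i $ k = of_real c * V $ i $ k)" for k c
    by (simp add: vec_eq_iff column_def) (simp add: scaleR_conv_of_real)
  show ?thesis
    unfolding A_def[symmetric] column_eq
  proof (intro iffI allI)
    fix k i
    assume diag: "real_diagonal A"
    have "V' = V ** (diag_mat (\<lambda>k. complex_of_real (1 / p k)) ** A)"
      using diag_gram_right_inverse[OF pos gram] by (simp add: A_def matrix_mul_assoc)
    then have "V' $ i $ k = (\<Sum>j\<in>UNIV. V $ i $ j * (of_real (1 / p j) * A $ j $ k))"
      by (simp add: matrix_mult_nth[of V] diag_mat_mult_nth)
    also have "\<dots> = (\<Sum>j\<in>UNIV. if j = k then V $ i $ k * (of_real (1 / p k) * A $ k $ k) else 0)"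
      using diag by (intro sum.cong) (auto simp: real_diagonal_def)
    also have "\<dots> = V $ i $ k * (of_real (1 / p k) * A $ k $ k)"
      by simp
    also have "A $ k $ k = of_real (Re (A $ k $ k))"
      using diag by (simp add: real_diagonal_def complex_eq_iff)
    finally show "V' $ i $ k = of_real (Re (A $ k $ k) / p k) * V $ i $ k"
      by (simp add: mult_ac)
  next
    assume "\<forall>k i. V' $ i $ k = of_real (Re (A $ k $ k) / p k) * V $ i $ k"
    moreover define c where "c k = Re (A $ k $ k) / p k" for k
    ultimately have cols: "\<And>k i. V' $ i $ k = of_real (c k) * V $ i $ k"
      by simp
    have "A $ j $ k = of_real (c k) * (cadj V ** V) $ j $ k" for j k
      by (simp add: A_def matrix_mult_nth cols sum_distrib_left mult_ac)
    then show "real_diagonal A"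
      by (simp add: real_diagonal_def gram diag_mat_def)
  qed
qed

lemma diag_gram_derivative:
  fixes V :: "real \<Rightarrow> complex^'n::finite^'n"
  assumes Vder: "(V has_vector_derivative V') (at t)"
    and gram: "\<And>s. cadj (V s) ** V s = diag_mat (\<lambda>k. of_real (p k s))"
  shows "j \<noteq> k \<Longrightarrow> (cadj V' ** V t + cadj (V t) ** V') $ j $ k = 0"
    and "(p k has_real_derivative 2 * Re ((cadj (V t) ** V') $ k $ k)) (at t)"
proof -
  have entry: "((\<lambda>s. (cadj (V s) ** V s) $ j $ k) has_vector_derivative
      (cadj V' ** V t + cadj (V t) ** V') $ j $ k) (at t)" for j k
    by (intro bounded_linear.has_vector_derivative[OF _ has_vector_derivative_cadj_mult[OF Vder]]
        bounded_linear_compose[OF bounded_linear_vec_nth bounded_linear_vec_nth])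
  show "(cadj V' ** V t + cadj (V t) ** V') $ j $ k = 0" if "j \<noteq> k"
  proof (rule vector_derivative_unique_at[OF entry])
    show "((\<lambda>s. (cadj (V s) ** V s) $ j $ k) has_vector_derivative 0) (at t)"
      using that by (simp add: gram diag_mat_def)
  qed
  have "((\<lambda>s. Re ((cadj (V s) ** V s) $ k $ k)) has_vector_derivative
      Re ((cadj V' ** V t + cadj (V t) ** V') $ k $ k)) (at t)"
    by (rule bounded_linear.has_vector_derivative[OF bounded_linear_Re entry])
  moreover have "(cadj V' ** V t) $ k $ k = cnj ((cadj (V t) ** V') $ k $ k)"
    by (simp add: matrix_mult_nth mult.commute)
  ultimately show "(p k has_real_derivative 2 * Re ((cadj (V t) ** V') $ k $ k)) (at t)"
    by (simp add: gram diag_mat_def has_real_derivative_iff_has_vector_derivative)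
qed

theorem sld_information_eq_iff_normalized_columns_constant:
  fixes V V' L :: "real \<Rightarrow> complex^'n::finite^'n" and p :: "'n \<Rightarrow> real \<Rightarrow> real"
  assumes pos: "\<And>k t. 0 < p k t"
    and Vder: "\<And>t. (V has_vector_derivative V' t) (at t)"
    and gram: "\<And>t. cadj (V t) ** V t = diag_mat (\<lambda>k. of_real (p k t))"
    and herm: "\<And>t. hermitian (L t)"
    and sld: "\<And>t. V' t ** cadj (V t) + V t ** cadj (V' t)
                = (1/2) *\<^sub>R (V t ** cadj (V t) ** L t + L t ** (V t ** cadj (V t)))"
  shows "(\<forall>t. trace (V t ** cadj (V t) ** L t ** L t) = 4 * trace (cadj (V' t) ** V' t))
    \<longleftrightarrow> (\<forall>k. \<exists>v. \<forall>t. (1 / sqrt (p k t)) *\<^sub>R column k (V t) = v)"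
proof -
  define c where "c k t = Re ((cadj (V t) ** V' t) $ k $ k) / p k t" for k t
  define W' where "W' k t = (1 / sqrt (p k t)) *\<^sub>R (column k (V' t) - c k t *\<^sub>R column k (V t))" for k t
  have "((\<lambda>s. (1 / sqrt (p k s)) *\<^sub>R column k (V s)) has_vector_derivative W' k t) (at t)" for k t
    using has_vector_derivative_normalize[OF pos diag_gram_derivative(2)[OF Vder gram]
        bounded_linear.has_vector_derivative[OF bounded_linear_column Vder]]
    by (simp add: W'_def c_def)
  then have constant_iff: "(\<exists>v. \<forall>t. (1 / sqrt (p k t)) *\<^sub>R column k (V t) = v) \<longleftrightarrow> (\<forall>t. W' k t = 0)" for k
    by (rule constant_iff_vector_derivative_zero)
  have pointwise: "trace (V t ** cadj (V t) ** L t ** L t) = 4 * trace (cadj (V' t) ** V' t)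
      \<longleftrightarrow> (\<forall>k. W' k t = 0)" for t
  proof -
    have "trace (V t ** cadj (V t) ** L t ** L t) = 4 * trace (cadj (V' t) ** V' t)
        \<longleftrightarrow> real_diagonal (cadj (V t) ** V' t)"
      by (rule sld_information_eq_iff[OF pos gram herm sld diag_gram_derivative(1)[OF Vder gram]])
    also have "\<dots> \<longleftrightarrow> (\<forall>k. column k (V' t) = c k t *\<^sub>R column k (V t))"
      unfolding c_def by (rule real_diagonal_iff_columns[OF pos gram])
    also have "\<dots> \<longleftrightarrow> (\<forall>k. W' k t = 0)"
    proof -
      have "W' k t = 0 \<longleftrightarrow> column k (V' t) = c k t *\<^sub>R column k (V t)" for k
        using pos[of k t] by (simp add: W'_def)
      then show ?thesis
        by simp
    qed
    finally show ?thesis .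
  qed
  show ?thesis
    unfolding pointwise constant_iff by blast
qed

definition kraus_columns :: "('k::finite \<Rightarrow> complex^'n^'n) \<Rightarrow> complex^'n \<Rightarrow> complex^'k^'n" where
  "kraus_columns E psi = (\<chi> i k. (E k *v psi) $ i)"

lemma column_kraus_columns [simp]: "column k (kraus_columns E psi) = E k *v psi"
  by (simp add: column_def kraus_columns_def)

lemma channel_out_outer:
  "channel_out E (outer psi psi) = kraus_columns E psi ** cadj (kraus_columns E psi)"
proof -
  have "channel_out E (outer psi psi) = (\<Sum>k\<in>UNIV. outer (E k *v psi) (E k *v psi))"
    by (simp add: channel_out_def outer_mult_left outer_mult_cadj)
  then show ?thesis
    by (simp add: vec_eq_iff sum_component outer_def matrix_mult_nth kraus_columns_def)
qed

lemma gram_kraus_columns_nth: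
  "(cadj (kraus_columns E psi) ** kraus_columns F psi) $ j $ k = trace (F k ** outer psi psi ** cadj (E j))"
  by (simp only: outer_mult_left outer_mult_cadj)
    (simp add: trace_def outer_def matrix_mult_nth kraus_columns_def mult.commute)

lemma C_Ups_eq_trace:
  "C_Ups U' psi t = 4 * trace (cadj (kraus_columns (\<lambda>k. U' k t) psi) ** kraus_columns (\<lambda>k. U' k t) psi)"
  by (simp add: C_Ups_def trace_def[of "_ ** _"] gram_kraus_columns_nth)

lemma has_vector_derivative_kraus_columns:
  fixes E :: "'k::finite \<Rightarrow> real \<Rightarrow> complex^'n::finite^'n"
  assumes "\<And>k. (E k has_vector_derivative E' k) (at t)"
  shows "((\<lambda>s. kraus_columns (\<lambda>k. E k s) psi) has_vector_derivative kraus_columns E' psi) (at t)"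
proof -
  have bl: "bounded_linear (\<lambda>A::complex^'n^'n. (A *v psi) $ i)" for i
    by (auto simp: linear_conv_bounded_linear[symmetric] matrix_vector_mult_def sum.distrib
        distrib_right scaleR_sum_right intro!: linearI)
  show ?thesis
    unfolding kraus_columns_def
    by (rule has_vector_derivative_vec_lambda, rule has_vector_derivative_vec_lambda,
        rule bounded_linear.has_vector_derivative[OF bl assms])
qed

theorem lemma3:
  fixes U U' :: "'n::finite \<Rightarrow> real \<Rightarrow> complex^'n^'n"
    and psi0 :: "complex^'n"
    and p :: "'n \<Rightarrow> real \<Rightarrow> real"
    and L :: "real \<Rightarrow> complex^'n^'n"
  assumes unit: "norm psi0 = 1"
    and kraus: "\<forall>\<theta>. (\<Sum>k\<in>UNIV. cadj (U k \<theta>) ** U k \<theta>) = mat 1"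
    and deriv: "\<forall>k \<theta>. (U k has_vector_derivative U' k \<theta>) (at \<theta>)"
    and canonical: "\<forall>j k \<theta>. trace (U k \<theta> ** outer psi0 psi0 ** cadj (U j \<theta>))
                              = (if j = k then complex_of_real (p k \<theta>) else 0)"
    and pos: "\<forall>j \<theta>. p j \<theta> > 0"
    and SLD: "\<forall>\<theta>. hermitian (L \<theta>) \<and>
               vector_derivative (rho_out U psi0) (at \<theta>)
                 = (1/2) *\<^sub>R (rho_out U psi0 \<theta> ** L \<theta> + L \<theta> ** rho_out U psi0 \<theta>)"
  shows "(\<forall>\<theta>. trace (rho_out U psi0 \<theta> ** L \<theta> ** L \<theta>) = C_Ups U' psi0 \<theta>)
         \<longleftrightarrow> (\<forall>k. \<exists>v. \<forall>\<theta>. wvec U p psi0 k \<theta> = v)"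
proof -
  define V where "V t = kraus_columns (\<lambda>k. U k t) psi0" for t
  define V' where "V' t = kraus_columns (\<lambda>k. U' k t) psi0" for t
  have Vder: "(V has_vector_derivative V' t) (at t)" for t
    unfolding V_def[abs_def] V'_def
    by (rule has_vector_derivative_kraus_columns) (use deriv in blast)
  have rho: "rho_out U psi0 = (\<lambda>t. V t ** cadj (V t))"
    by (simp add: fun_eq_iff rho_out_def V_def channel_out_outer)
  have gram: "cadj (V t) ** V t = diag_mat (\<lambda>k. of_real (p k t))" for t
    using canonical by (simp add: vec_eq_iff V_def gram_kraus_columns_nth diag_mat_def)
  have sld: "V' t ** cadj (V t) + V t ** cadj (V' t)
      = (1/2) *\<^sub>R (V t ** cadj (V t) ** L t + L t ** (V t ** cadj (V t)))" for t
    using SLD vector_derivative_at[OF has_vector_derivative_mult_cadj[OF Vder]] by (simp add: rho)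
  have "C_Ups U' psi0 t = 4 * trace (cadj (V' t) ** V' t)" for t
    by (simp add: V'_def C_Ups_eq_trace)
  moreover have "wvec U p psi0 k = (\<lambda>t. (1 / sqrt (p k t)) *\<^sub>R column k (V t))" for k
    by (simp add: fun_eq_iff wvec_def V_def)
  ultimately show ?thesis
    using sld_information_eq_iff_normalized_columns_constant[OF _ Vder gram _ sld] pos SLD
    by (simp add: rho)
qed

end
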